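(* Let $U,V,W\in\widetilde{\mathcal V}^r$, $K,S\in\mathcal B^q$ and $f,g\in C^\infty(\mathbb R)$. Suppose \[ (EV)U-UV=U'[K]+fU_\lambda,\qquad (EW)U-UW=U'[S]+gU_\lambda . \] Then \[ (E[\![V,W]\!])U-U[\![V,W]\!]=U'[T]+[\![f,g]\!]U_\lambda,\qquad T=[K,S], \] where $[K,S]=K'[S]-S'[K]$, $[\![V,W]\!]=V'[S]-W'[K]+VW-WV+gV_\lambda-fW_\lambda$ and $[\![f,g]\!]=f'g-fg'$.
   Context: Let $u=(u_1,\dots,u_q)^T$ with $u_i=u_i(t,n)$ real functions on $\mathbb R\times\mathbb Z$. $\mathcal B$ is the space of real functions $P(t,n,u)$, $C^\infty$ in $t,n$ and $C^\infty$-Gateaux differentiable in $u$; $\mathcal B^q$ is $q$-component vectors over $\mathcal B$. $\widetilde{\mathcal V}^r$ is the set of $r\times r$ matrices with entries $V_{ij}(t,n,u,\lambda)\in\mathcal B$ for each real parameter $\lambda$, smooth in $\lambda$; $V_\lambda=\partial V/\partial\lambda$. $E$ is the shift operator $(Ex)(n)=x(n+1)$; for a matrix $V$ depending on $n$ and $u$, $EV$ is $V$ with $n$ replaced by $n+1$ (so $u(n)$ becomes $u(n+1)$). Gateaux derivative: $X'[S]=\frac{d}{d\varepsilon}\big|_{\varepsilon=0}X(u+\varepsilon S)$. Products are matrix products. *)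

theory Defs
  imports "HOL-Analysis.Analysis"
begin

text \<open>Lattice fields: at a fixed time t, u is the sequence m \<mapsto> u(t,m) \<in> R^q.
  An element of B (resp. B^q, resp. a matrix entry of V^r) is modelled as a function
  F t n u lambda with values in a real normed vector space (real, real^'q, real^'r^'r);
  functions independent of lambda are simply constant in the last argument.\<close>

type_synonym ('q, 'b) latfun = "real \<Rightarrow> int \<Rightarrow> (int \<Rightarrow> real^'q) \<Rightarrow> real \<Rightarrow> 'b"
type_synonym 'q latvec = "real \<Rightarrow> int \<Rightarrow> (int \<Rightarrow> real^'q) \<Rightarrow> real^'q"

definition local_fn :: "('q::finite, 'b) latfun \<Rightarrow> bool" where
  "local_fn F \<longleftrightarrow> (\<exists>N::nat. \<forall>t n u v l.
      (\<forall>m. \<bar>m - n\<bar> \<le> int N \<longrightarrow> u m = v m) \<longrightarrow> F t n u l = F t n v l)"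

definition dir_deriv :: "('q::finite, 'b::real_normed_vector) latfun \<Rightarrow> real \<Rightarrow> (int \<Rightarrow> real^'q) \<Rightarrow> real
     \<Rightarrow> ('q, 'b) latfun" where
  "dir_deriv F \<tau> h \<mu> = (\<lambda>t n u l.
     vector_derivative (\<lambda>\<epsilon>. F (t + \<epsilon> * \<tau>) n (\<lambda>m. u m + \<epsilon> *\<^sub>R h m) (l + \<epsilon> * \<mu>)) (at 0))"

text \<open>k times continuously (Gateaux) differentiable, jointly in (t, u, lambda);
  continuity w.r.t. the product topology on sequences.\<close>
fun smooth_k :: "nat \<Rightarrow> ('q::finite, 'b::real_normed_vector) latfun \<Rightarrow> bool" where
  "smooth_k 0 F = (\<forall>n. continuous_on UNIV (\<lambda>(t, u, l). F t n u l))"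
| "smooth_k (Suc k) F = (smooth_k 0 F
      \<and> (\<forall>\<tau> h \<mu> t n u l. (\<lambda>\<epsilon>. F (t + \<epsilon> * \<tau>) n (\<lambda>m. u m + \<epsilon> *\<^sub>R h m) (l + \<epsilon> * \<mu>))
             differentiable (at 0))
      \<and> (\<forall>\<tau> h \<mu>. smooth_k k (dir_deriv F \<tau> h \<mu>)))"

definition lat_smooth :: "('q::finite, 'b::real_normed_vector) latfun \<Rightarrow> bool" where
  "lat_smooth F \<longleftrightarrow> local_fn F \<and> (\<forall>k. smooth_k k F)"

definition inBq :: "'q::finite latvec \<Rightarrow> bool" where
  "inBq K \<longleftrightarrow> lat_smooth (\<lambda>t n u l. K t n u)"

definition inVr :: "('q::finite, real^'r^'r) latfun \<Rightarrow> bool" where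
  "inVr V \<longleftrightarrow> lat_smooth V"

definition smooth_real :: "(real \<Rightarrow> real) \<Rightarrow> bool" where
  "smooth_real f \<longleftrightarrow> (\<forall>k x. ((deriv ^^ k) f) differentiable (at x))"

definition gder :: "('q::finite, 'b::real_normed_vector) latfun \<Rightarrow> 'q latvec \<Rightarrow> ('q, 'b) latfun" where
  "gder X S = (\<lambda>t n u l. vector_derivative (\<lambda>\<epsilon>. X t n (\<lambda>m. u m + \<epsilon> *\<^sub>R S t m u) l) (at 0))"

definition gderq :: "'q::finite latvec \<Rightarrow> 'q latvec \<Rightarrow> 'q latvec" where
  "gderq X S = (\<lambda>t n u. vector_derivative (\<lambda>\<epsilon>. X t n (\<lambda>m. u m + \<epsilon> *\<^sub>R S t m u)) (at 0))"

definition shiftE :: "('q, 'b) latfun \<Rightarrow> ('q, 'b) latfun" where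
  "shiftE X = (\<lambda>t n u l. X t (n + 1) u l)"

definition lder :: "('q::finite, 'b::real_normed_vector) latfun \<Rightarrow> ('q, 'b) latfun" where
  "lder X = (\<lambda>t n u l. vector_derivative (\<lambda>l'. X t n u l') (at l))"

definition vf_bracket :: "'q::finite latvec \<Rightarrow> 'q latvec \<Rightarrow> 'q latvec" where
  "vf_bracket K S = (\<lambda>t n u. gderq K S t n u - gderq S K t n u)"

definition mat_bracket :: "('q::finite, real^'r^'r) latfun \<Rightarrow> ('q, real^'r^'r) latfun
    \<Rightarrow> 'q latvec \<Rightarrow> 'q latvec \<Rightarrow> (real \<Rightarrow> real) \<Rightarrow> (real \<Rightarrow> real) \<Rightarrow> ('q, real^'r^'r) latfun" where
  "mat_bracket V W K S f g = (\<lambda>t n u l.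
      gder V S t n u l - gder W K t n u l + V t n u l ** W t n u l - W t n u l ** V t n u l
      + g l *\<^sub>R lder V t n u l - f l *\<^sub>R lder W t n u l)"

definition fun_bracket :: "(real \<Rightarrow> real) \<Rightarrow> (real \<Rightarrow> real) \<Rightarrow> real \<Rightarrow> real" where
  "fun_bracket f g = (\<lambda>l. deriv f l * g l - f l * deriv g l)"

end

theory Submission
  imports Defs
begin

text \<open>Write L X = (EX)U - UX.  Differentiating the hypothesis for V along S and in \<lambda>,
  and the one for W along K and in \<lambda>, expresses L of V'[S], W'[K], V_\<lambda> and W_\<lambda>
  through derivatives of U, while L(VW - WV) follows from the hypotheses themselves.
  In the sum all first-order cross terms cancel, and the mixed second derivatives of U
  cancel in pairs because they are symmetric; what survives is the part of (U'[K])'[S]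
  that differentiates the direction K, giving U'[K'[S] - S'[K]], and the derivatives of
  f and g, giving [[f,g]] U_\<lambda>.

  Symmetry of second Gateaux derivatives and linearity in the direction follow from the
  continuity of the derivatives restricted to planes.  Locality of U makes U'[h] a finite
  linear combination of coordinates of h, which yields the chain rule when the direction
  depends on u.\<close>

section \<open>Mixed partial derivatives in two real variables\<close>

lemma vector_derivative_increment_bound:
  fixes f :: "real \<Rightarrow> 'b::real_normed_vector"
  assumes deriv: "\<And>x. x \<in> closed_segment a b \<Longrightarrow> (f has_vector_derivative f' x) (at x)"
    and bound: "\<And>x. x \<in> closed_segment a b \<Longrightarrow> norm (f' x - c) \<le> B"
  shows "norm (f b - f a - (b - a) *\<^sub>R c) \<le> \<bar>b - a\<bar> * B"
proof -
  define g where "g x = f x - x *\<^sub>R c" for x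
  have "(g has_derivative (\<lambda>h. h *\<^sub>R (f' x - c))) (at x within closed_segment a b)"
    if "x \<in> closed_segment a b" for x
  proof -
    have "((\<lambda>x. f x - x *\<^sub>R c) has_vector_derivative (f' x - c)) (at x)"
      using deriv[OF that] by (auto intro!: derivative_eq_intros)
    then show ?thesis
      unfolding g_def has_vector_derivative_def by (simp add: has_derivative_at_withinI)
  qed
  then have "norm (g b - g a) \<le> B * norm (b - a)"
  proof (rule differentiable_bound[OF convex_closed_segment])
    fix x assume "x \<in> closed_segment a b"
    then have "norm (f' x - c) \<le> B" by (rule bound)
    then show "onorm (\<lambda>h. h *\<^sub>R (f' x - c)) \<le> B"
      by (intro onorm_le) (simp add: mult.commute[of B] mult_left_mono)
  qed auto
  then show ?thesis by (simp add: g_def algebra_simps)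
qed

lemma continuous_at_origin_square:
  fixes \<psi> :: "real \<Rightarrow> real \<Rightarrow> 'b::real_normed_vector"
  assumes "continuous (at (0, 0)) (\<lambda>(s, r). \<psi> s r)" and "e > 0"
  obtains d where "d > 0" "\<And>s r. \<bar>s\<bar> < d \<Longrightarrow> \<bar>r\<bar> < d \<Longrightarrow> norm (\<psi> s r - \<psi> 0 0) \<le> e"
proof -
  obtain d where d: "d > 0"
    "\<And>p. dist p (0, 0) < d \<Longrightarrow> dist ((\<lambda>(s, r). \<psi> s r) p) (\<psi> 0 0) < e"
    using assms unfolding continuous_at_eps_delta by fastforce
  have "norm (\<psi> s r - \<psi> 0 0) \<le> e" if "\<bar>s\<bar> < d / 2" "\<bar>r\<bar> < d / 2" for s r
  proof -
    have "dist (s, r) (0, 0) < d"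
      using that sqrt_sum_squares_le_sum_abs[of s r] by (simp add: dist_Pair_Pair dist_real_def)
    then show ?thesis using d(2) by (fastforce simp: dist_norm)
  qed
  then show thesis using d(1) by (intro that[of "d / 2"]) auto
qed

lemma mixed_second_difference_bound:
  fixes P P\<^sub>1 P\<^sub>1\<^sub>2 :: "real \<Rightarrow> real \<Rightarrow> 'b::real_normed_vector"
  assumes d1: "\<And>s r. ((\<lambda>s. P s r) has_vector_derivative P\<^sub>1 s r) (at s)"
    and d12: "\<And>s r. ((\<lambda>r. P\<^sub>1 s r) has_vector_derivative P\<^sub>1\<^sub>2 s r) (at r)"
    and close: "\<And>s r. \<bar>s\<bar> < d \<Longrightarrow> \<bar>r\<bar> < d \<Longrightarrow> norm (P\<^sub>1\<^sub>2 s r - P\<^sub>1\<^sub>2 0 0) \<le> e"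
    and "\<bar>s\<bar> < d" "\<bar>r\<bar> < d"
  shows "norm (P s r - P s 0 - P 0 r + P 0 0 - (s * r) *\<^sub>R P\<^sub>1\<^sub>2 0 0) \<le> \<bar>s\<bar> * (\<bar>r\<bar> * e)"
proof -
  have small: "\<bar>x\<bar> < d" if "x \<in> closed_segment 0 y" "\<bar>y\<bar> < d" for x y
    using that by (auto simp: closed_segment_eq_real_ivl split: if_splits)
  have inner: "norm (P\<^sub>1 x r - P\<^sub>1 x 0 - r *\<^sub>R P\<^sub>1\<^sub>2 0 0) \<le> \<bar>r\<bar> * e" if "\<bar>x\<bar> < d" for x
    using vector_derivative_increment_bound[of 0 r "\<lambda>r. P\<^sub>1 x r" "\<lambda>r. P\<^sub>1\<^sub>2 x r" "P\<^sub>1\<^sub>2 0 0" e]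
      d12 close small that \<open>\<bar>r\<bar> < d\<close> by auto
  have "norm ((P s r - P s 0) - (P 0 r - P 0 0) - (s - 0) *\<^sub>R (r *\<^sub>R P\<^sub>1\<^sub>2 0 0)) \<le> \<bar>s - 0\<bar> * (\<bar>r\<bar> * e)"
    using small \<open>\<bar>s\<bar> < d\<close>
    by (intro vector_derivative_increment_bound[of 0 s _ "\<lambda>s. P\<^sub>1 s r - P\<^sub>1 s 0"] inner)
      (auto intro!: derivative_intros d1)
  then show ?thesis by (simp add: algebra_simps)
qed

lemma mixed_partials_commute:
  fixes \<phi> \<phi>\<^sub>1 \<phi>\<^sub>1\<^sub>2 \<phi>\<^sub>2 \<phi>\<^sub>2\<^sub>1 :: "real \<Rightarrow> real \<Rightarrow> 'b::real_normed_vector"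
  assumes d1: "\<And>s r. ((\<lambda>s. \<phi> s r) has_vector_derivative \<phi>\<^sub>1 s r) (at s)"
    and d12: "\<And>s r. ((\<lambda>r. \<phi>\<^sub>1 s r) has_vector_derivative \<phi>\<^sub>1\<^sub>2 s r) (at r)"
    and d2: "\<And>s r. ((\<lambda>r. \<phi> s r) has_vector_derivative \<phi>\<^sub>2 s r) (at r)"
    and d21: "\<And>s r. ((\<lambda>s. \<phi>\<^sub>2 s r) has_vector_derivative \<phi>\<^sub>2\<^sub>1 s r) (at s)"
    and c12: "continuous (at (0, 0)) (\<lambda>(s, r). \<phi>\<^sub>1\<^sub>2 s r)"
    and c21: "continuous (at (0, 0)) (\<lambda>(s, r). \<phi>\<^sub>2\<^sub>1 s r)"
  shows "\<phi>\<^sub>1\<^sub>2 0 0 = \<phi>\<^sub>2\<^sub>1 0 0"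
proof -
  have "norm (\<phi>\<^sub>1\<^sub>2 0 0 - \<phi>\<^sub>2\<^sub>1 0 0) \<le> 0 + e" if "e > 0" for e
  proof -
    have c21': "continuous (at (0, 0)) (\<lambda>(s, r). \<phi>\<^sub>2\<^sub>1 r s)"
      using continuous_at_compose[of "(0, 0)" "\<lambda>p. (snd p, fst p)" "\<lambda>(s, r). \<phi>\<^sub>2\<^sub>1 s r"] c21
      by (simp add: o_def split_beta' continuous_intros)
    obtain d\<^sub>1 where d\<^sub>1: "d\<^sub>1 > 0"
      "\<And>s r. \<bar>s\<bar> < d\<^sub>1 \<Longrightarrow> \<bar>r\<bar> < d\<^sub>1 \<Longrightarrow> norm (\<phi>\<^sub>1\<^sub>2 s r - \<phi>\<^sub>1\<^sub>2 0 0) \<le> e / 2"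
      using continuous_at_origin_square[OF c12, of "e / 2"] \<open>e > 0\<close> by auto
    obtain d\<^sub>2 where d\<^sub>2: "d\<^sub>2 > 0"
      "\<And>s r. \<bar>s\<bar> < d\<^sub>2 \<Longrightarrow> \<bar>r\<bar> < d\<^sub>2 \<Longrightarrow> norm (\<phi>\<^sub>2\<^sub>1 r s - \<phi>\<^sub>2\<^sub>1 0 0) \<le> e / 2"
      using continuous_at_origin_square[OF c21', of "e / 2"] \<open>e > 0\<close> by auto
    define x where "x = min d\<^sub>1 d\<^sub>2 / 2"
    have x: "x > 0" "\<bar>x\<bar> < d\<^sub>1" "\<bar>x\<bar> < d\<^sub>2"
      using d\<^sub>1 d\<^sub>2 by (auto simp: x_def)
    have A: "norm (\<phi> x x - \<phi> x 0 - \<phi> 0 x + \<phi> 0 0 - (x * x) *\<^sub>R \<phi>\<^sub>1\<^sub>2 0 0) \<le> x * (x * (e / 2))"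
      using mixed_second_difference_bound[OF d1 d12 d\<^sub>1(2)] x by fastforce
    have B: "norm (\<phi> x x - \<phi> 0 x - \<phi> x 0 + \<phi> 0 0 - (x * x) *\<^sub>R \<phi>\<^sub>2\<^sub>1 0 0) \<le> x * (x * (e / 2))"
      using mixed_second_difference_bound[where P = "\<lambda>s r. \<phi> r s" and P\<^sub>1\<^sub>2 = "\<lambda>s r. \<phi>\<^sub>2\<^sub>1 r s",
          OF d2 d21 d\<^sub>2(2)] x by fastforce
    have "(x * x) * norm (\<phi>\<^sub>1\<^sub>2 0 0 - \<phi>\<^sub>2\<^sub>1 0 0)
        = norm ((\<phi> x x - \<phi> 0 x - \<phi> x 0 + \<phi> 0 0 - (x * x) *\<^sub>R \<phi>\<^sub>2\<^sub>1 0 0)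
            - (\<phi> x x - \<phi> x 0 - \<phi> 0 x + \<phi> 0 0 - (x * x) *\<^sub>R \<phi>\<^sub>1\<^sub>2 0 0))"
      by (simp add: algebra_simps flip: scaleR_diff_right)
    also have "\<dots> \<le> (x * x) * e"
      using norm_triangle_ineq4 A B by (smt (verit, best) field_sum_of_halves mult.assoc distrib_left)
    finally show ?thesis using x by simp
  qed
  then have "norm (\<phi>\<^sub>1\<^sub>2 0 0 - \<phi>\<^sub>2\<^sub>1 0 0) \<le> 0" by (rule field_le_epsilon)
  then show ?thesis by simp
qed

lemma has_vector_derivative_diagonal:
  fixes \<phi> \<psi> :: "real \<Rightarrow> real \<Rightarrow> 'b::real_normed_vector"
  assumes d1: "((\<lambda>s. \<phi> s 0) has_vector_derivative A) (at 0)"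
    and d2: "\<And>s r. ((\<lambda>r. \<phi> s r) has_vector_derivative \<psi> s r) (at r)"
    and c2: "continuous (at (0, 0)) (\<lambda>(s, r). \<psi> s r)"
  shows "((\<lambda>y. \<phi> y y) has_vector_derivative A + \<psi> 0 0) (at 0)"
  unfolding has_vector_derivative_def has_derivative_at_alt
proof (intro conjI allI impI)
  show "bounded_linear (\<lambda>y. y *\<^sub>R (A + \<psi> 0 0))" by (rule bounded_linear_scaleR_left)
  fix e :: real assume "e > 0"
  obtain d\<^sub>1 where d\<^sub>1: "d\<^sub>1 > 0"
    "\<And>y. norm (y - 0) < d\<^sub>1 \<Longrightarrow> norm (\<phi> y 0 - \<phi> 0 0 - (y - 0) *\<^sub>R A) \<le> e / 2 * norm (y - 0)"
    using d1 \<open>e > 0\<close> unfolding has_vector_derivative_def has_derivative_at_alt by (meson half_gt_zero)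
  obtain d\<^sub>2 where d\<^sub>2: "d\<^sub>2 > 0"
    "\<And>s r. \<bar>s\<bar> < d\<^sub>2 \<Longrightarrow> \<bar>r\<bar> < d\<^sub>2 \<Longrightarrow> norm (\<psi> s r - \<psi> 0 0) \<le> e / 2"
    using continuous_at_origin_square[OF c2, of "e / 2"] \<open>e > 0\<close> by auto
  have "norm (\<phi> y y - \<phi> 0 0 - y *\<^sub>R (A + \<psi> 0 0)) \<le> e * \<bar>y\<bar>" if y: "\<bar>y\<bar> < min d\<^sub>1 d\<^sub>2" for y
  proof -
    have "norm (\<phi> y y - \<phi> y 0 - (y - 0) *\<^sub>R \<psi> 0 0) \<le> \<bar>y - 0\<bar> * (e / 2)"
    proof (rule vector_derivative_increment_bound[OF d2])
      fix x assume "x \<in> closed_segment 0 y"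
      then have "\<bar>x\<bar> \<le> \<bar>y\<bar>" by (auto simp: closed_segment_eq_real_ivl split: if_splits)
      then show "norm (\<psi> y x - \<psi> 0 0) \<le> e / 2" using d\<^sub>2(2) y by simp
    qed
    moreover have "norm (\<phi> y 0 - \<phi> 0 0 - y *\<^sub>R A) \<le> e / 2 * \<bar>y\<bar>"
      using d\<^sub>1(2)[of y] y by simp
    ultimately show ?thesis
      using norm_triangle_ineq[of "\<phi> y 0 - \<phi> 0 0 - y *\<^sub>R A" "\<phi> y y - \<phi> y 0 - y *\<^sub>R \<psi> 0 0"]
      by (simp add: algebra_simps)
  qed
  then show "\<exists>d>0. \<forall>y. norm (y - 0) < d \<longrightarrow>
      norm (\<phi> y y - \<phi> 0 0 - (y - 0) *\<^sub>R (A + \<psi> 0 0)) \<le> e * norm (y - 0)"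
    using d\<^sub>1(1) d\<^sub>2(1) by (intro exI[of _ "min d\<^sub>1 d\<^sub>2"]) auto
qed

section \<open>Directional derivatives of smooth lattice functions\<close>

definition smooth_inf :: "('q::finite, 'b::real_normed_vector) latfun \<Rightarrow> bool" where
  "smooth_inf F \<longleftrightarrow> (\<forall>k. smooth_k k F)"

lemma smooth_inf_dir_deriv: "smooth_inf F \<Longrightarrow> smooth_inf (dir_deriv F \<tau> h \<mu>)"
  unfolding smooth_inf_def by (metis smooth_k.simps(2))

lemma smooth_inf_has_dir_deriv:
  assumes "smooth_inf F"
  shows "((\<lambda>\<epsilon>. F (t + \<epsilon> * \<tau>) n (\<lambda>m. u m + \<epsilon> *\<^sub>R h m) (l + \<epsilon> * \<mu>)) has_vector_derivative
           dir_deriv F \<tau> h \<mu> (t + s * \<tau>) n (\<lambda>m. u m + s *\<^sub>R h m) (l + s * \<mu>)) (at s)"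
proof -
  let ?p = "\<lambda>\<epsilon>. F (t + s * \<tau> + \<epsilon> * \<tau>) n (\<lambda>m. u m + s *\<^sub>R h m + \<epsilon> *\<^sub>R h m) (l + s * \<mu> + \<epsilon> * \<mu>)"
  have "smooth_k (Suc 0) F" using assms unfolding smooth_inf_def by blast
  then have "?p differentiable (at 0)" by simp
  then have "(?p has_vector_derivative
      dir_deriv F \<tau> h \<mu> (t + s * \<tau>) n (\<lambda>m. u m + s *\<^sub>R h m) (l + s * \<mu>)) (at (s - s))"
    unfolding dir_deriv_def by (simp add: vector_derivative_works)
  moreover have "((\<lambda>\<epsilon>. \<epsilon> - s) has_vector_derivative 1) (at s)"
    by (auto intro!: derivative_eq_intros)
  ultimately have "((?p \<circ> (\<lambda>\<epsilon>. \<epsilon> - s)) has_vector_derivative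
      dir_deriv F \<tau> h \<mu> (t + s * \<tau>) n (\<lambda>m. u m + s *\<^sub>R h m) (l + s * \<mu>)) (at s)"
    using vector_diff_chain_at by fastforce
  moreover have "?p \<circ> (\<lambda>\<epsilon>. \<epsilon> - s) = (\<lambda>\<epsilon>. F (t + \<epsilon> * \<tau>) n (\<lambda>m. u m + \<epsilon> *\<^sub>R h m) (l + \<epsilon> * \<mu>))"
    by (simp add: fun_eq_iff algebra_simps)
  ultimately show ?thesis by simp
qed

lemma smooth_inf_continuous_plane:
  assumes "smooth_inf F"
  shows "continuous (at p) (\<lambda>(s, r). F (t + s * \<tau>\<^sub>1 + r * \<tau>\<^sub>2) n
            (\<lambda>m. u m + s *\<^sub>R h\<^sub>1 m + r *\<^sub>R h\<^sub>2 m) (l + s * \<mu>\<^sub>1 + r * \<mu>\<^sub>2))"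
proof -
  have F_cont: "continuous_on UNIV (\<lambda>(t, u, l). F t n u l)"
    using assms unfolding smooth_inf_def by (metis smooth_k.simps(1))
  have plane_cont: "continuous_on UNIV (\<lambda>(s, r). (t + s * \<tau>\<^sub>1 + r * \<tau>\<^sub>2,
      (\<lambda>m. u m + s *\<^sub>R h\<^sub>1 m + r *\<^sub>R h\<^sub>2 m), l + s * \<mu>\<^sub>1 + r * \<mu>\<^sub>2))"
    unfolding split_beta'
    by (intro continuous_on_Pair continuous_on_coordinatewise_then_product continuous_intros)
  have "continuous_on UNIV ((\<lambda>(t, u, l). F t n u l) \<circ> (\<lambda>(s, r). (t + s * \<tau>\<^sub>1 + r * \<tau>\<^sub>2,
      (\<lambda>m. u m + s *\<^sub>R h\<^sub>1 m + r *\<^sub>R h\<^sub>2 m), l + s * \<mu>\<^sub>1 + r * \<mu>\<^sub>2)))"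
    by (rule continuous_on_compose[OF plane_cont continuous_on_subset[OF F_cont]]) simp
  then show ?thesis
    by (cases p) (simp add: continuous_on_eq_continuous_at o_def case_prod_beta')
qed

lemma dir_deriv_add:
  assumes F: "smooth_inf F"
  shows "dir_deriv F (\<tau>\<^sub>1 + \<tau>\<^sub>2) (\<lambda>m. h\<^sub>1 m + h\<^sub>2 m) (\<mu>\<^sub>1 + \<mu>\<^sub>2) t n u l
       = dir_deriv F \<tau>\<^sub>1 h\<^sub>1 \<mu>\<^sub>1 t n u l + dir_deriv F \<tau>\<^sub>2 h\<^sub>2 \<mu>\<^sub>2 t n u l"
proof -
  define \<phi> where "\<phi> s r = F (t + s * \<tau>\<^sub>1 + r * \<tau>\<^sub>2) n
      (\<lambda>m. u m + s *\<^sub>R h\<^sub>1 m + r *\<^sub>R h\<^sub>2 m) (l + s * \<mu>\<^sub>1 + r * \<mu>\<^sub>2)" for s r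
  define \<psi> where "\<psi> s r = dir_deriv F \<tau>\<^sub>2 h\<^sub>2 \<mu>\<^sub>2 (t + s * \<tau>\<^sub>1 + r * \<tau>\<^sub>2) n
      (\<lambda>m. u m + s *\<^sub>R h\<^sub>1 m + r *\<^sub>R h\<^sub>2 m) (l + s * \<mu>\<^sub>1 + r * \<mu>\<^sub>2)" for s r
  have "((\<lambda>s. \<phi> s 0) has_vector_derivative dir_deriv F \<tau>\<^sub>1 h\<^sub>1 \<mu>\<^sub>1 t n u l) (at 0)"
    using smooth_inf_has_dir_deriv[OF F, of t \<tau>\<^sub>1 n u h\<^sub>1 l \<mu>\<^sub>1 0] by (simp add: \<phi>_def)
  moreover have "((\<lambda>r. \<phi> s r) has_vector_derivative \<psi> s r) (at r)" for s r
    using smooth_inf_has_dir_deriv[OF F, of "t + s * \<tau>\<^sub>1" \<tau>\<^sub>2 n "\<lambda>m. u m + s *\<^sub>R h\<^sub>1 m" h\<^sub>2 "l + s * \<mu>\<^sub>1"]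
    by (simp add: \<phi>_def \<psi>_def)
  moreover have "continuous (at (0, 0)) (\<lambda>(s, r). \<psi> s r)"
    unfolding \<psi>_def by (intro smooth_inf_continuous_plane smooth_inf_dir_deriv F)
  ultimately have "((\<lambda>y. \<phi> y y) has_vector_derivative
      dir_deriv F \<tau>\<^sub>1 h\<^sub>1 \<mu>\<^sub>1 t n u l + dir_deriv F \<tau>\<^sub>2 h\<^sub>2 \<mu>\<^sub>2 t n u l) (at 0)"
    using has_vector_derivative_diagonal by (fastforce simp: \<psi>_def)
  then show ?thesis
    unfolding dir_deriv_def \<phi>_def by (simp add: algebra_simps vector_derivative_at)
qed

lemma dir_deriv_scaleR:
  assumes F: "smooth_inf F"
  shows "dir_deriv F (c * \<tau>) (\<lambda>m. c *\<^sub>R h m) (c * \<mu>) t n u l = c *\<^sub>R dir_deriv F \<tau> h \<mu> t n u l"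
proof -
  let ?p = "\<lambda>\<epsilon>. F (t + \<epsilon> * \<tau>) n (\<lambda>m. u m + \<epsilon> *\<^sub>R h m) (l + \<epsilon> * \<mu>)"
  have "(?p has_vector_derivative dir_deriv F \<tau> h \<mu> t n u l) (at (c * 0))"
    using smooth_inf_has_dir_deriv[OF F, of t \<tau> n u h l \<mu> 0] by simp
  then have "((\<lambda>\<epsilon>. ?p (c * \<epsilon>)) has_vector_derivative c *\<^sub>R dir_deriv F \<tau> h \<mu> t n u l) (at 0)"
    using vector_diff_chain_at[of "\<lambda>\<epsilon>. c * \<epsilon>" c 0 ?p]
    by (auto intro!: derivative_eq_intros simp: o_def has_real_derivative_iff_has_vector_derivative[symmetric])
  then show ?thesis
    unfolding dir_deriv_def by (simp add: vector_derivative_at algebra_simps)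
qed

lemma dir_deriv_sum_field:
  assumes F: "smooth_inf F" and "finite I"
  shows "dir_deriv F 0 (\<lambda>m. \<Sum>i\<in>I. c i *\<^sub>R h i m) 0 t n u l
       = (\<Sum>i\<in>I. c i *\<^sub>R dir_deriv F 0 (h i) 0 t n u l)"
  using \<open>finite I\<close>
proof (induction I rule: finite_induct)
  case empty
  then show ?case by (simp add: dir_deriv_def)
next
  case (insert i I)
  then show ?case
    using dir_deriv_add[OF F, of 0 0 "\<lambda>m. c i *\<^sub>R h i m" "\<lambda>m. \<Sum>i\<in>I. c i *\<^sub>R h i m" 0 0]
      dir_deriv_scaleR[OF F, of "c i" 0 "h i" 0]
    by simp
qed

lemma dir_deriv_diff_field:
  assumes F: "smooth_inf F"
  shows "dir_deriv F 0 (\<lambda>m. h\<^sub>1 m - h\<^sub>2 m) 0 t n u l = dir_deriv F 0 h\<^sub>1 0 t n u l - dir_deriv F 0 h\<^sub>2 0 t n u l"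
  using dir_deriv_sum_field[OF F, of "{True, False}" "\<lambda>i. if i then 1 else -1" "\<lambda>i. if i then h\<^sub>1 else h\<^sub>2"]
  by (simp add: algebra_simps)

lemma dir_deriv_commute:
  assumes F: "smooth_inf F"
  shows "dir_deriv (dir_deriv F \<tau>\<^sub>1 h\<^sub>1 \<mu>\<^sub>1) \<tau>\<^sub>2 h\<^sub>2 \<mu>\<^sub>2 t n u l
       = dir_deriv (dir_deriv F \<tau>\<^sub>2 h\<^sub>2 \<mu>\<^sub>2) \<tau>\<^sub>1 h\<^sub>1 \<mu>\<^sub>1 t n u l"
proof -
  define on_plane :: "('a, 'b) latfun \<Rightarrow> real \<Rightarrow> real \<Rightarrow> 'b" where
    "on_plane G s r = G (t + s * \<tau>\<^sub>1 + r * \<tau>\<^sub>2) n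
       (\<lambda>m. u m + s *\<^sub>R h\<^sub>1 m + r *\<^sub>R h\<^sub>2 m) (l + s * \<mu>\<^sub>1 + r * \<mu>\<^sub>2)" for G s r
  have swap: "on_plane G s r = G (t + r * \<tau>\<^sub>2 + s * \<tau>\<^sub>1) n
      (\<lambda>m. u m + r *\<^sub>R h\<^sub>2 m + s *\<^sub>R h\<^sub>1 m) (l + r * \<mu>\<^sub>2 + s * \<mu>\<^sub>1)" for G s r
    by (simp add: on_plane_def algebra_simps)
  have d1: "((\<lambda>s. on_plane G s r) has_vector_derivative on_plane (dir_deriv G \<tau>\<^sub>1 h\<^sub>1 \<mu>\<^sub>1) s r) (at s)"
    if "smooth_inf G" for G s r
    unfolding swap by (rule smooth_inf_has_dir_deriv[OF that])
  have d2: "((\<lambda>r. on_plane G s r) has_vector_derivative on_plane (dir_deriv G \<tau>\<^sub>2 h\<^sub>2 \<mu>\<^sub>2) s r) (at r)"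
    if "smooth_inf G" for G s r
    using smooth_inf_has_dir_deriv[OF that, of "t + s * \<tau>\<^sub>1" \<tau>\<^sub>2 n "\<lambda>m. u m + s *\<^sub>R h\<^sub>1 m" h\<^sub>2 "l + s * \<mu>\<^sub>1" \<mu>\<^sub>2]
    by (simp add: on_plane_def)
  have cont: "continuous (at (0, 0)) (\<lambda>(s, r). on_plane G s r)" if "smooth_inf G" for G
    unfolding on_plane_def by (rule smooth_inf_continuous_plane[OF that])
  have "on_plane (dir_deriv (dir_deriv F \<tau>\<^sub>1 h\<^sub>1 \<mu>\<^sub>1) \<tau>\<^sub>2 h\<^sub>2 \<mu>\<^sub>2) 0 0
      = on_plane (dir_deriv (dir_deriv F \<tau>\<^sub>2 h\<^sub>2 \<mu>\<^sub>2) \<tau>\<^sub>1 h\<^sub>1 \<mu>\<^sub>1) 0 0"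
    by (rule mixed_partials_commute[where \<phi> = "on_plane F"
          and \<phi>\<^sub>1 = "on_plane (dir_deriv F \<tau>\<^sub>1 h\<^sub>1 \<mu>\<^sub>1)" and \<phi>\<^sub>2 = "on_plane (dir_deriv F \<tau>\<^sub>2 h\<^sub>2 \<mu>\<^sub>2)"
          and \<phi>\<^sub>1\<^sub>2 = "on_plane (dir_deriv (dir_deriv F \<tau>\<^sub>1 h\<^sub>1 \<mu>\<^sub>1) \<tau>\<^sub>2 h\<^sub>2 \<mu>\<^sub>2)"
          and \<phi>\<^sub>2\<^sub>1 = "on_plane (dir_deriv (dir_deriv F \<tau>\<^sub>2 h\<^sub>2 \<mu>\<^sub>2) \<tau>\<^sub>1 h\<^sub>1 \<mu>\<^sub>1)"])
      (intro d1 d2 cont smooth_inf_dir_deriv F)+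
  then show ?thesis by (simp add: on_plane_def)
qed

section \<open>Local functions\<close>

definition local_radius :: "('q::finite, 'b) latfun \<Rightarrow> nat \<Rightarrow> bool" where
  "local_radius F N \<longleftrightarrow> (\<forall>t n u v l.
      (\<forall>m. \<bar>m - n\<bar> \<le> int N \<longrightarrow> u m = v m) \<longrightarrow> F t n u l = F t n v l)"

lemma local_fn_iff_local_radius: "local_fn F \<longleftrightarrow> (\<exists>N. local_radius F N)"
  unfolding local_fn_def local_radius_def ..

definition unit_field :: "int \<times> 'q::finite \<Rightarrow> int \<Rightarrow> real^'q" where
  "unit_field p m = (if m = fst p then axis (snd p) 1 else 0)"

lemma sum_unit_field:
  fixes h :: "int \<Rightarrow> real^'q::finite"
  assumes "finite M" "m \<in> M"
  shows "(\<Sum>p\<in>M \<times> UNIV. (h (fst p) $ snd p) *\<^sub>R unit_field p m) = h m"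
  unfolding vec_eq_iff
proof
  fix k :: 'q
  have "(\<Sum>p\<in>M \<times> UNIV. (h (fst p) $ snd p) *\<^sub>R unit_field p m) $ k
      = (\<Sum>p\<in>M \<times> UNIV. if p = (m, k) then h m $ k else 0)"
    unfolding sum_component by (rule sum.cong) (auto simp: unit_field_def axis_def)
  then show "(\<Sum>p\<in>M \<times> UNIV. (h (fst p) $ snd p) *\<^sub>R unit_field p m) $ k = h m $ k"
    using assms by (simp add: sum.delta')
qed

lemma dir_deriv_local_expansion:
  assumes F: "smooth_inf F" and N: "local_radius F N"
  shows "dir_deriv F 0 h 0 t n u l
     = (\<Sum>p\<in>{n - int N..n + int N} \<times> UNIV. (h (fst p) $ snd p) *\<^sub>R dir_deriv F 0 (unit_field p) 0 t n u l)"
proof -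
  let ?M = "{n - int N..n + int N}"
  let ?h = "\<lambda>m. \<Sum>p\<in>?M \<times> UNIV. (h (fst p) $ snd p) *\<^sub>R unit_field p m"
  have agree: "u m + \<epsilon> *\<^sub>R h m = u m + \<epsilon> *\<^sub>R ?h m" if "\<bar>m - n\<bar> \<le> int N" for m \<epsilon>
    using that by (subst sum_unit_field) auto
  have "F t n (\<lambda>m. u m + \<epsilon> *\<^sub>R h m) l = F t n (\<lambda>m. u m + \<epsilon> *\<^sub>R ?h m) l" for \<epsilon>
    by (rule N[unfolded local_radius_def, rule_format]) (simp add: agree)
  then have "dir_deriv F 0 h 0 t n u l = dir_deriv F 0 ?h 0 t n u l"
    unfolding dir_deriv_def by simp
  then show ?thesis by (simp add: dir_deriv_sum_field[OF F])
qed

lemma has_vector_derivative_dir_deriv_varying: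
  assumes F: "smooth_inf F" and N: "local_radius F N"
    and h: "\<And>m. ((\<lambda>\<epsilon>. h \<epsilon> m) has_vector_derivative h' m) (at 0)"
  shows "((\<lambda>\<epsilon>. dir_deriv F 0 (h \<epsilon>) 0 t n (\<lambda>m. u m + \<epsilon> *\<^sub>R k m) l) has_vector_derivative
           dir_deriv (dir_deriv F 0 (h 0) 0) 0 k 0 t n u l + dir_deriv F 0 h' 0 t n u l) (at 0)"
proof -
  let ?P = "{n - int N..n + int N} \<times> (UNIV :: 'a set)"
  define D where "D p = (\<lambda>\<epsilon>. dir_deriv F 0 (unit_field p) 0 t n (\<lambda>m. u m + \<epsilon> *\<^sub>R k m) l)" for p
  define D' where "D' p = dir_deriv (dir_deriv F 0 (unit_field p) 0) 0 k 0 t n u l" for p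
  have D: "(D p has_vector_derivative D' p) (at 0)" for p
    using smooth_inf_has_dir_deriv[OF smooth_inf_dir_deriv[OF F, of 0 "unit_field p" 0], of t 0 n u k l 0 0]
    by (simp add: D_def D'_def)
  have h_coord: "((\<lambda>\<epsilon>. h \<epsilon> m $ j) has_vector_derivative h' m $ j) (at 0)" for m j
    using bounded_linear.has_vector_derivative[OF bounded_linear_vec_nth h] .
  have expand: "dir_deriv F 0 h\<^sub>0 0 t n (\<lambda>m. u m + \<epsilon> *\<^sub>R k m) l
      = (\<Sum>p\<in>?P. (h\<^sub>0 (fst p) $ snd p) *\<^sub>R D p \<epsilon>)" for h\<^sub>0 \<epsilon>
    unfolding D_def by (rule dir_deriv_local_expansion[OF F N])
  have "((\<lambda>\<epsilon>. \<Sum>p\<in>?P. (h \<epsilon> (fst p) $ snd p) *\<^sub>R D p \<epsilon>) has_vector_derivative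
      (\<Sum>p\<in>?P. (h 0 (fst p) $ snd p) *\<^sub>R D' p + (h' (fst p) $ snd p) *\<^sub>R D p 0)) (at 0)"
    by (intro has_vector_derivative_sum has_vector_derivative_scaleR
        h_coord[unfolded has_real_derivative_iff_has_vector_derivative[symmetric]] D)
  moreover have "(\<Sum>p\<in>?P. (h 0 (fst p) $ snd p) *\<^sub>R D' p)
      = dir_deriv (dir_deriv F 0 (h 0) 0) 0 k 0 t n u l"
  proof (rule vector_derivative_unique_at)
    show "((\<lambda>\<epsilon>. dir_deriv F 0 (h 0) 0 t n (\<lambda>m. u m + \<epsilon> *\<^sub>R k m) l) has_vector_derivative
        (\<Sum>p\<in>?P. (h 0 (fst p) $ snd p) *\<^sub>R D' p)) (at 0)"
      unfolding expand by (intro has_vector_derivative_sum bounded_linear.has_vector_derivative[OF bounded_linear_scaleR_right] D)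
    show "((\<lambda>\<epsilon>. dir_deriv F 0 (h 0) 0 t n (\<lambda>m. u m + \<epsilon> *\<^sub>R k m) l) has_vector_derivative
        dir_deriv (dir_deriv F 0 (h 0) 0) 0 k 0 t n u l) (at 0)"
      using smooth_inf_has_dir_deriv[OF smooth_inf_dir_deriv[OF F, of 0 "h 0" 0], of t 0 n u k l 0 0]
      by simp
  qed
  moreover have "(\<Sum>p\<in>?P. (h' (fst p) $ snd p) *\<^sub>R D p 0) = dir_deriv F 0 h' 0 t n u l"
    using expand[of h' 0] by simp
  ultimately show ?thesis
    unfolding expand by (simp add: sum.distrib)
qed

section \<open>Differentiating the intertwining relation\<close>

lemma bounded_bilinear_matrix_mult:
  "bounded_bilinear ((**) :: real^'n::finite^'m::finite \<Rightarrow> real^'p::finite^'n \<Rightarrow> real^'p^'m)"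
proof -
  have "bilinear ((**) :: real^'n^'m \<Rightarrow> real^'p^'n \<Rightarrow> real^'p^'m)"
    unfolding bilinear_def
    by (auto intro!: linearI simp: matrix_matrix_mult_def vec_eq_iff sum.distrib
        distrib_left distrib_right sum_distrib_left mult_ac)
  then show ?thesis by (rule bilinear_conv_bounded_bilinear[THEN iffD1])
qed

lemmas matrix_mult_bilinear_simps =
  bounded_bilinear.add_left[OF bounded_bilinear_matrix_mult]
  bounded_bilinear.add_right[OF bounded_bilinear_matrix_mult]
  bounded_bilinear.diff_left[OF bounded_bilinear_matrix_mult]
  bounded_bilinear.diff_right[OF bounded_bilinear_matrix_mult]
  bounded_bilinear.scaleR_left[OF bounded_bilinear_matrix_mult]
  bounded_bilinear.scaleR_right[OF bounded_bilinear_matrix_mult]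

lemma has_vector_derivative_matrix_mult:
  fixes A B :: "real \<Rightarrow> real^'n::finite^'n"
  assumes "(A has_vector_derivative A') (at x)" "(B has_vector_derivative B') (at x)"
  shows "((\<lambda>x. A x ** B x) has_vector_derivative A' ** B x + A x ** B') (at x)"
  using bounded_bilinear.has_vector_derivative[OF bounded_bilinear_matrix_mult assms]
  by (simp add: add.commute)

lemma gder_eq_dir_deriv: "gder X K t n u l = dir_deriv X 0 (\<lambda>m. K t m u) 0 t n u l"
  unfolding gder_def dir_deriv_def by simp

lemma has_vector_derivative_gder:
  assumes "(\<lambda>\<epsilon>. X t n (\<lambda>m. u m + \<epsilon> *\<^sub>R K t m u) l) differentiable (at 0)"
  shows "((\<lambda>\<epsilon>. X t n (\<lambda>m. u m + \<epsilon> *\<^sub>R K t m u) l) has_vector_derivative gder X K t n u l) (at 0)"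
  using assms unfolding gder_def by (rule vector_derivative_works[THEN iffD1])

lemma has_vector_derivative_lder:
  assumes "(\<lambda>l. X t n u l) differentiable (at l)"
  shows "((\<lambda>l. X t n u l) has_vector_derivative lder X t n u l) (at l)"
  using assms unfolding lder_def by (rule vector_derivative_works[THEN iffD1])

lemma smooth_inf_differentiable_gder:
  "smooth_inf X \<Longrightarrow> (\<lambda>\<epsilon>. X t n (\<lambda>m. u m + \<epsilon> *\<^sub>R K t m u) l) differentiable (at 0)"
  using smooth_inf_has_dir_deriv[of X t 0 n u "\<lambda>m. K t m u" l 0 0]
  by (auto simp: differentiable_def has_vector_derivative_def)

lemma smooth_inf_differentiable_lder:
  "smooth_inf X \<Longrightarrow> (\<lambda>l. X t n u l) differentiable (at l)"
  using smooth_inf_has_dir_deriv[of X t 0 n u "\<lambda>m. 0" 0 1 l]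
  by (auto simp: differentiable_def has_vector_derivative_def)

lemma lder_eq_dir_deriv: "smooth_inf X \<Longrightarrow> lder X = dir_deriv X 0 (\<lambda>m. 0) 1"
  using smooth_inf_has_dir_deriv[of X _ 0 _ _ "\<lambda>m. 0" 0 1]
  by (auto simp: fun_eq_iff lder_def intro!: vector_derivative_at)

lemma smooth_inf_lder: "smooth_inf X \<Longrightarrow> smooth_inf (lder X)"
  by (simp add: lder_eq_dir_deriv smooth_inf_dir_deriv)

lemma lder_gder_eq_dir_deriv:
  "smooth_inf U \<Longrightarrow> lder (gder U K) t n u l = dir_deriv (dir_deriv U 0 (\<lambda>m. K t m u) 0) 0 (\<lambda>m. 0) 1 t n u l"
  using lder_eq_dir_deriv[OF smooth_inf_dir_deriv, of U 0 "\<lambda>m. K t m u" 0]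
  by (simp add: lder_def gder_eq_dir_deriv fun_eq_iff)

lemma differentiable_lder_gder:
  "smooth_inf U \<Longrightarrow> (\<lambda>l. gder U K t n u l) differentiable (at l)"
  unfolding gder_eq_dir_deriv by (intro smooth_inf_differentiable_lder smooth_inf_dir_deriv)

lemma gder_lder_commute:
  "smooth_inf U \<Longrightarrow> gder (lder U) K t n u l = lder (gder U K) t n u l"
  by (simp add: gder_eq_dir_deriv lder_gder_eq_dir_deriv lder_eq_dir_deriv dir_deriv_commute)

lemma has_vector_derivative_gderq:
  assumes "smooth_inf (\<lambda>t n u l. K t n u)"
  shows "((\<lambda>\<epsilon>. K t m (\<lambda>m'. u m' + \<epsilon> *\<^sub>R S t m' u)) has_vector_derivative gderq K S t m u) (at 0)"
  using smooth_inf_differentiable_gder[OF assms, where t = t and n = m and u = u and K = S]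
  unfolding gderq_def by (simp add: vector_derivative_works)

lemma has_vector_derivative_gder_line:
  assumes U: "smooth_inf U" "local_radius U N" and K: "smooth_inf (\<lambda>t n u l. K t n u)"
  shows "((\<lambda>\<epsilon>. gder U K t n (\<lambda>m. u m + \<epsilon> *\<^sub>R S t m u) l) has_vector_derivative
           dir_deriv (dir_deriv U 0 (\<lambda>m. K t m u) 0) 0 (\<lambda>m. S t m u) 0 t n u l
           + gder U (gderq K S) t n u l) (at 0)"
  unfolding gder_eq_dir_deriv
  by (rule has_vector_derivative_dir_deriv_varying[OF U has_vector_derivative_gderq[OF K], simplified])

lemma gder_gder_eq:
  assumes "smooth_inf U" "local_radius U N" "smooth_inf (\<lambda>t n u l. K t n u)"
  shows "gder (gder U K) S t n u l
       = dir_deriv (dir_deriv U 0 (\<lambda>m. K t m u) 0) 0 (\<lambda>m. S t m u) 0 t n u l + gder U (gderq K S) t n u l"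
  unfolding gder_def[of "gder U K"]
  by (rule vector_derivative_at[OF has_vector_derivative_gder_line[OF assms]])

lemma gder_commutator:
  assumes U: "smooth_inf U" "local_radius U N"
    and K: "smooth_inf (\<lambda>t n u l. K t n u)" and S: "smooth_inf (\<lambda>t n u l. S t n u)"
  shows "gder (gder U K) S t n u l - gder (gder U S) K t n u l = gder U (vf_bracket K S) t n u l"
  unfolding gder_gder_eq[OF U K] gder_gder_eq[OF U S]
  by (simp add: dir_deriv_commute[OF U(1)] gder_eq_dir_deriv vf_bracket_def dir_deriv_diff_field[OF U(1)])

definition intertwines ::
    "('q::finite, real^'r^'r) latfun \<Rightarrow> ('q, real^'r^'r) latfun \<Rightarrow> 'q latvec \<Rightarrow> (real \<Rightarrow> real) \<Rightarrow> bool" where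
  "intertwines U V K f \<longleftrightarrow> (\<forall>t n u l. shiftE V t n u l ** U t n u l - U t n u l ** V t n u l
      = gder U K t n u l + f l *\<^sub>R lder U t n u l)"

lemma intertwines_gder:
  fixes U V :: "('q::finite, real^'r::finite^'r) latfun"
  assumes "intertwines U V K f" and U: "smooth_inf U" and N: "local_radius U N" and V: "smooth_inf V"
    and K: "smooth_inf (\<lambda>t n u l. K t n u)"
  shows "gder V S t (n + 1) u l ** U t n u l + V t (n + 1) u l ** gder U S t n u l
       - (gder U S t n u l ** V t n u l + U t n u l ** gder V S t n u l)
     = gder (gder U K) S t n u l + f l *\<^sub>R gder (lder U) S t n u l"
proof (rule vector_derivative_unique_at)
  let ?v = "\<lambda>\<epsilon> m. u m + \<epsilon> *\<^sub>R S t m u"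
  have gd: "((\<lambda>\<epsilon>. X t n (?v \<epsilon>) l) has_vector_derivative gder X S t n u l) (at 0)"
    if "smooth_inf X" for X :: "('q, real^'r^'r) latfun" and n
    by (intro has_vector_derivative_gder smooth_inf_differentiable_gder that)
  show "((\<lambda>\<epsilon>. V t (n + 1) (?v \<epsilon>) l ** U t n (?v \<epsilon>) l - U t n (?v \<epsilon>) l ** V t n (?v \<epsilon>) l)
      has_vector_derivative gder V S t (n + 1) u l ** U t n u l + V t (n + 1) u l ** gder U S t n u l
       - (gder U S t n u l ** V t n u l + U t n u l ** gder V S t n u l)) (at 0)"
    using has_vector_derivative_diff[OF has_vector_derivative_matrix_mult[OF gd[OF V] gd[OF U]]
        has_vector_derivative_matrix_mult[OF gd[OF U] gd[OF V]]] by simp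
  have "((\<lambda>\<epsilon>. gder U K t n (?v \<epsilon>) l + f l *\<^sub>R lder U t n (?v \<epsilon>) l) has_vector_derivative
      gder (gder U K) S t n u l + f l *\<^sub>R gder (lder U) S t n u l) (at 0)"
    by (intro has_vector_derivative_add has_vector_derivative_gder
        bounded_linear.has_vector_derivative[OF bounded_linear_scaleR_right] gd smooth_inf_lder U
        differentiableI_vector[OF has_vector_derivative_gder_line[OF U N K]])
  then show "((\<lambda>\<epsilon>. V t (n + 1) (?v \<epsilon>) l ** U t n (?v \<epsilon>) l - U t n (?v \<epsilon>) l ** V t n (?v \<epsilon>) l)
      has_vector_derivative gder (gder U K) S t n u l + f l *\<^sub>R gder (lder U) S t n u l) (at 0)"
    using assms(1) by (simp add: intertwines_def shiftE_def)
qed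

lemma intertwines_lder:
  fixes U V :: "('q::finite, real^'r::finite^'r) latfun"
  assumes "intertwines U V K f" and U: "smooth_inf U" and V: "smooth_inf V"
    and f: "(f has_real_derivative f') (at l)"
  shows "lder V t (n + 1) u l ** U t n u l + V t (n + 1) u l ** lder U t n u l
       - (lder U t n u l ** V t n u l + U t n u l ** lder V t n u l)
     = lder (gder U K) t n u l + (f l *\<^sub>R lder (lder U) t n u l + f' *\<^sub>R lder U t n u l)"
proof (rule vector_derivative_unique_at)
  have ld: "((\<lambda>l. X t n u l) has_vector_derivative lder X t n u l) (at l)"
    if "smooth_inf X" for X :: "('q, real^'r^'r) latfun" and n
    by (intro has_vector_derivative_lder smooth_inf_differentiable_lder that)
  show "((\<lambda>l. V t (n + 1) u l ** U t n u l - U t n u l ** V t n u l) has_vector_derivative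
      lder V t (n + 1) u l ** U t n u l + V t (n + 1) u l ** lder U t n u l
       - (lder U t n u l ** V t n u l + U t n u l ** lder V t n u l)) (at l)"
    by (intro has_vector_derivative_diff has_vector_derivative_matrix_mult ld U V)
  have "((\<lambda>l. gder U K t n u l + f l *\<^sub>R lder U t n u l) has_vector_derivative
      lder (gder U K) t n u l + (f l *\<^sub>R lder (lder U) t n u l + f' *\<^sub>R lder U t n u l)) (at l)"
    by (intro has_vector_derivative_add has_vector_derivative_scaleR has_vector_derivative_lder
        differentiable_lder_gder ld smooth_inf_lder U f)
  then show "((\<lambda>l. V t (n + 1) u l ** U t n u l - U t n u l ** V t n u l) has_vector_derivative
      lder (gder U K) t n u l + (f l *\<^sub>R lder (lder U) t n u l + f' *\<^sub>R lder U t n u l)) (at l)"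
    using assms(1) by (simp add: intertwines_def shiftE_def)
qed

lemma intertwining_bracket_algebra:
  fixes U V W EV EW VS EVS WK EWK Vl EVl Wl EWl UK US Ul UKS USK UlK UlS Ull :: "real^'r::finite^'r"
  assumes hV: "EV ** U - U ** V = UK + f *\<^sub>R Ul"
    and hW: "EW ** U - U ** W = US + g *\<^sub>R Ul"
    and hVS: "EVS ** U + EV ** US - (US ** V + U ** VS) = UKS + f *\<^sub>R UlS"
    and hWK: "EWK ** U + EW ** UK - (UK ** W + U ** WK) = USK + g *\<^sub>R UlK"
    and hVl: "EVl ** U + EV ** Ul - (Ul ** V + U ** Vl) = UlK + (f *\<^sub>R Ull + f' *\<^sub>R Ul)"
    and hWl: "EWl ** U + EW ** Ul - (Ul ** W + U ** Wl) = UlS + (g *\<^sub>R Ull + g' *\<^sub>R Ul)"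
  shows "(EVS - EWK + EV ** EW - EW ** EV + g *\<^sub>R EVl - f *\<^sub>R EWl) ** U
       - U ** (VS - WK + V ** W - W ** V + g *\<^sub>R Vl - f *\<^sub>R Wl)
       = (UKS - USK) + (f' * g - f * g') *\<^sub>R Ul"
proof -
  have EVU: "EV ** U = U ** V + UK + f *\<^sub>R Ul" using hV by (simp add: algebra_simps)
  have EWU: "EW ** U = U ** W + US + g *\<^sub>R Ul" using hW by (simp add: algebra_simps)
  have EVEW: "(EV ** EW) ** U = (U ** V) ** W + UK ** W + f *\<^sub>R (Ul ** W) + EV ** US + g *\<^sub>R (EV ** Ul)"
  proof -
    have "(EV ** EW) ** U = (EV ** U) ** W + EV ** US + g *\<^sub>R (EV ** Ul)"
      by (simp add: EWU matrix_mult_bilinear_simps flip: matrix_mul_assoc)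
    then show ?thesis by (simp add: EVU matrix_mult_bilinear_simps)
  qed
  have EWEV: "(EW ** EV) ** U = (U ** W) ** V + US ** V + g *\<^sub>R (Ul ** V) + EW ** UK + f *\<^sub>R (EW ** Ul)"
  proof -
    have "(EW ** EV) ** U = (EW ** U) ** V + EW ** UK + f *\<^sub>R (EW ** Ul)"
      by (simp add: EVU matrix_mult_bilinear_simps flip: matrix_mul_assoc)
    then show ?thesis by (simp add: EWU matrix_mult_bilinear_simps)
  qed
  have "(EVS - EWK + EV ** EW - EW ** EV + g *\<^sub>R EVl - f *\<^sub>R EWl) ** U
       - U ** (VS - WK + V ** W - W ** V + g *\<^sub>R Vl - f *\<^sub>R Wl)
     = EVS ** U - EWK ** U + (EV ** EW) ** U - (EW ** EV) ** U + g *\<^sub>R (EVl ** U) - f *\<^sub>R (EWl ** U)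
       - (U ** VS - U ** WK + (U ** V) ** W - (U ** W) ** V + g *\<^sub>R (U ** Vl) - f *\<^sub>R (U ** Wl))"
    by (simp add: matrix_mult_bilinear_simps matrix_mul_assoc)
  also have "\<dots> = (UKS - USK) + (f' * g - f * g') *\<^sub>R Ul"
  proof -
    have solved: "EVS ** U = UKS + f *\<^sub>R UlS - EV ** US + US ** V + U ** VS"
      "EWK ** U = USK + g *\<^sub>R UlK - EW ** UK + UK ** W + U ** WK"
      "EVl ** U = UlK + f *\<^sub>R Ull + f' *\<^sub>R Ul - EV ** Ul + Ul ** V + U ** Vl"
      "EWl ** U = UlS + g *\<^sub>R Ull + g' *\<^sub>R Ul - EW ** Ul + Ul ** W + U ** Wl"
      using hVS hWK hVl hWl by (simp_all add: algebra_simps)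
    show ?thesis unfolding EVEW EWEV solved by (simp add: algebra_simps)
  qed
  finally show ?thesis .
qed

lemma smooth_real_has_real_derivative: "smooth_real f \<Longrightarrow> (f has_real_derivative deriv f x) (at x)"
  unfolding smooth_real_def by (metis DERIV_deriv_iff_real_differentiable funpow_0)

lemma intertwines_bracket:
  fixes U V W :: "('q::finite, real^'r::finite^'r) latfun"
  assumes hV: "intertwines U V K f" and hW: "intertwines U W S g"
    and U: "smooth_inf U" and N: "local_radius U N" and V: "smooth_inf V" and W: "smooth_inf W"
    and K: "smooth_inf (\<lambda>t n u l. K t n u)" and S: "smooth_inf (\<lambda>t n u l. S t n u)"
    and f: "\<And>l. (f has_real_derivative deriv f l) (at l)"
    and g: "\<And>l. (g has_real_derivative deriv g l) (at l)"
  shows "intertwines U (mat_bracket V W K S f g) (vf_bracket K S) (fun_bracket f g)"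
  unfolding intertwines_def
proof (intro allI)
  fix t n u l
  note hV' = hV[unfolded intertwines_def shiftE_def, rule_format, of t n u l]
  note hW' = hW[unfolded intertwines_def shiftE_def, rule_format, of t n u l]
  note hVS = intertwines_gder[OF hV U N V K, of S t n u l]
  note hWK = intertwines_gder[OF hW U N W S, of K t n u l]
  note hVl = intertwines_lder[OF hV U V f, of t n u]
  note hWl = intertwines_lder[OF hW U W g, of t n u]
  show "shiftE (mat_bracket V W K S f g) t n u l ** U t n u l - U t n u l ** mat_bracket V W K S f g t n u l
      = gder U (vf_bracket K S) t n u l + fun_bracket f g l *\<^sub>R lder U t n u l"
    using intertwining_bracket_algebra[OF hV' hW' hVS[unfolded gder_lder_commute[OF U]]
        hWK[unfolded gder_lder_commute[OF U]] hVl hWl]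
    by (simp add: shiftE_def mat_bracket_def fun_bracket_def gder_commutator[OF U N K S] mult.commute)
qed

theorem theorem2:
  fixes U V W :: "('q::finite, real^'r^'r) latfun"
    and K S :: "'q latvec"
    and f g :: "real \<Rightarrow> real"
  assumes "inVr U" "inVr V" "inVr W" "inBq K" "inBq S" "smooth_real f" "smooth_real g"
    and hV: "\<forall>t n u l. shiftE V t n u l ** U t n u l - U t n u l ** V t n u l
               = gder U K t n u l + f l *\<^sub>R lder U t n u l"
    and hW: "\<forall>t n u l. shiftE W t n u l ** U t n u l - U t n u l ** W t n u l
               = gder U S t n u l + g l *\<^sub>R lder U t n u l"
  shows "\<forall>t n u l. shiftE (mat_bracket V W K S f g) t n u l ** U t n u l
                   - U t n u l ** mat_bracket V W K S f g t n u l
               = gder U (vf_bracket K S) t n u l + fun_bracket f g l *\<^sub>R lder U t n u l"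
proof -
  have smooth: "smooth_inf U" "smooth_inf V" "smooth_inf W"
    "smooth_inf (\<lambda>t n u l. K t n u)" "smooth_inf (\<lambda>t n u l. S t n u)"
    using assms(1-5) by (simp_all add: inVr_def inBq_def lat_smooth_def smooth_inf_def)
  obtain N where "local_radius U N"
    using assms(1) by (auto simp: inVr_def lat_smooth_def local_fn_iff_local_radius)
  then have "intertwines U (mat_bracket V W K S f g) (vf_bracket K S) (fun_bracket f g)"
    using hV hW smooth smooth_real_has_real_derivative assms(6,7)
    by (intro intertwines_bracket) (simp_all add: intertwines_def)
  then show ?thesis unfolding intertwines_def .
qed

end
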